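(* On $A=\mathbb{C}_q[S^2]$ with its complex structure, equip $\mathcal{S}_+$ with the holomorphic structure $\overline{\partial}_{\mathcal{S}_+}(xf^+)=(\partial_-x)e^-a\otimes df^+-q^{-1}(\partial_-x)e^-c\otimes bf^+$ and the hermitian inner product $\langle xf^+,\overline{yf^+}\rangle=xy^*$. Then the Chern connection (the unique metric-preserving left connection whose $(0,1)$-part is $\overline\partial_{\mathcal S_+}$) is $$\nabla_{\mathcal{S}_+}(xf^+)=\pi{\rm d}x.a\otimes df^+-q^{-1}\,\pi{\rm d}x.c\otimes bf^+ ,$$ i.e. it coincides with the $q$-monopole connection on $\mathcal S_+$.
   Context: $q$ is real nonzero. $\mathbb{C}_q[SU_2]$ is the $*$-algebra generated by $a,b,c,d$ with $ba=qab$, $ca=qac$, $db=qbd$, $dc=qcd$, $bc=cb$, $da-ad=(q-q^{-1})bc$, $ad-q^{-1}bc=1$, graded by $|a|=|c|=1$, $|b|=|d|=-1$, with Woronowicz's left-covariant 3D calculus with left basis $e^0,e^\pm$ (degrees $0,\pm2$), $e^\pm x=q^{|x|}xe^\pm$, $(e^\pm)^*=-q^{\mp1}e^\mp$; $\pi$ kills $e^0$ and $\pi{\rm d}x=(\partial_+x)e^++(\partial_-x)e^-$. $\mathbb C_q[S^2]$ is the degree-0 subalgebra with $\Omega^1=\Omega^{1,0}\oplus\Omega^{0,1}$, $\Omega^{1,0}=\{fe^+:|f|=-2\}$, $\Omega^{0,1}=\{fe^-:|f|=2\}$, $\partial x=(\partial_+x)e^+$, $\overline\partial x=(\partial_-x)e^-$,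 ${\rm d}=\pi{\rm d}$, $\Omega^{0,2}=\Omega^{2,0}=0$. $\mathcal S_+=\{xf^+:x\in\mathbb C_q[SU_2],|x|=-1\}$ where $f^+$ is a formal symbol commuting with $\mathbb C_q[S^2]$; metric preservation and the conjugate module are as usual: $\overline{\mathcal S_+}$ has $a.\overline\phi=\overline{\phi.a^*}$, and $\nabla$ preserves $\langle,\rangle$ if ${\rm d}\langle\phi,\overline\psi\rangle=(\mathrm{id}\otimes\langle,\rangle)(\nabla\phi\otimes\overline\psi)+(\langle,\rangle\otimes\mathrm{id})(\phi\otimes\tilde\nabla\overline\psi)$, $\tilde\nabla(\overline\psi)=\overline g\otimes\kappa^*$ for $\nabla\psi=\kappa\otimes g$. *)

theory Defs
  imports Complex_Main "HOL-Library.Poly_Mapping"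
begin

datatype gen = GA | GB | GC | GD

datatype word = W "gen list"

fun unW :: "word \<Rightarrow> gen list" where "unW (W l) = l"

instantiation word :: monoid_add
begin
definition zero_word :: word where "zero_word = W []"
fun plus_word :: "word \<Rightarrow> word \<Rightarrow> word" where "plus_word (W x) (W y) = W (x @ y)"
instance
proof
  fix x y z :: word
  show "x + y + z = x + (y + z)" by (cases x; cases y; cases z) simp
  show "0 + x = x" by (cases x) (simp add: zero_word_def)
  show "x + 0 = x" by (cases x) (simp add: zero_word_def)
qed
end

text \<open>Free (noncommutative) complex algebra on the generators: finitely supported
  complex-valued functions on words, with convolution product.\<close>
type_synonym fa = "word \<Rightarrow>\<^sub>0 complex"

definition cst :: "complex \<Rightarrow> fa" where "cst c = Poly_Mapping.single 0 c"

definition wd :: "gen list \<Rightarrow> fa" where "wd l = Poly_Mapping.single (W l) 1"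

definition gA :: fa where "gA = wd [GA]"
definition gB :: fa where "gB = wd [GB]"
definition gC :: fa where "gC = wd [GC]"
definition gD :: fa where "gD = wd [GD]"

fun gdeg :: "gen \<Rightarrow> int" where
  "gdeg GA = 1" | "gdeg GB = -1" | "gdeg GC = 1" | "gdeg GD = -1"

definition wdeg :: "gen list \<Rightarrow> int" where "wdeg l = sum_list (map gdeg l)"

definition Qc :: "real \<Rightarrow> fa" where "Qc q = cst (complex_of_real q)"

definition rels :: "real \<Rightarrow> fa set" where
  "rels q = { gB * gA - Qc q * gA * gB,
              gC * gA - Qc q * gA * gC,
              gD * gB - Qc q * gB * gD,
              gD * gC - Qc q * gC * gD,
              gB * gC - gC * gB,
              gD * gA - gA * gD - (Qc q - cst (complex_of_real (1/q))) * gB * gC,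
              gA * gD - cst (complex_of_real (1/q)) * gB * gC - 1 }"

inductive_set relI :: "real \<Rightarrow> fa set" for q :: real where
  gen: "r \<in> rels q \<Longrightarrow> r \<in> relI q"
| zero: "0 \<in> relI q"
| add: "x \<in> relI q \<Longrightarrow> y \<in> relI q \<Longrightarrow> x + y \<in> relI q"
| lmul: "x \<in> relI q \<Longrightarrow> y * x \<in> relI q"
| rmul: "x \<in> relI q \<Longrightarrow> x * y \<in> relI q"

text \<open>Equality in C_q[SU_2].\<close>
definition eqq :: "real \<Rightarrow> fa \<Rightarrow> fa \<Rightarrow> bool" where
  "eqq q x y \<longleftrightarrow> x - y \<in> relI q"

definition homq :: "real \<Rightarrow> int \<Rightarrow> fa \<Rightarrow> bool" where
  "homq q n x \<longleftrightarrow> (\<exists>p. eqq q x p \<and> (\<forall>w\<in>Poly_Mapping.keys p. wdeg (unW w) = n))"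

fun starg :: "real \<Rightarrow> gen \<Rightarrow> fa" where
  "starg q GA = gD"
| "starg q GB = - (Qc q * gC)"
| "starg q GC = - (cst (complex_of_real (1/q)) * gB)"
| "starg q GD = gA"

fun starw :: "real \<Rightarrow> gen list \<Rightarrow> fa" where
  "starw q [] = 1"
| "starw q (g # l) = starw q l * starg q g"

definition starq :: "real \<Rightarrow> fa \<Rightarrow> fa" where
  "starq q p = (\<Sum>w\<in>Poly_Mapping.keys p. cst (cnj (Poly_Mapping.lookup p w)) * starw q (unW w))"

section \<open>The partial derivatives of the 3D calculus: twisted derivations
  del_+ (xy) = (del_+ x) q^{|y|} y + x del_+ y, with
  del_+ a = b, del_+ c = d, del_+ b = del_+ d = 0,
  del_- b = q a, del_- d = q c, del_- a = del_- c = 0\<close>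

fun dg :: "bool \<Rightarrow> real \<Rightarrow> gen \<Rightarrow> fa" where
  "dg True q GA = gB"
| "dg True q GC = gD"
| "dg True q GB = 0"
| "dg True q GD = 0"
| "dg False q GB = Qc q * gA"
| "dg False q GD = Qc q * gC"
| "dg False q GA = 0"
| "dg False q GC = 0"

fun dw :: "bool \<Rightarrow> real \<Rightarrow> gen list \<Rightarrow> fa" where
  "dw s q [] = 0"
| "dw s q (g # l) = cst (complex_of_real (q powi wdeg l)) * dg s q g * wd l + wd [g] * dw s q l"

text \<open>dfree True = del_+, dfree False = del_-.\<close>
definition dfree :: "bool \<Rightarrow> real \<Rightarrow> fa \<Rightarrow> fa" where
  "dfree s q p = (\<Sum>w\<in>Poly_Mapping.keys p. cst (Poly_Mapping.lookup p w) * dw s q (unW w))"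

section \<open>Horizontal one-forms f_+ e^+ + f_- e^- (represented as pairs (f_+, f_-))\<close>

type_synonym form = "fa \<times> fa"

text \<open>pi d x = (del_+ x) e^+ + (del_- x) e^-\<close>
definition pid :: "real \<Rightarrow> fa \<Rightarrow> form" where
  "pid q x = (dfree True q x, dfree False q x)"

definition fadd :: "form \<Rightarrow> form \<Rightarrow> form" where
  "fadd w v = (fst w + fst v, snd w + snd v)"

definition fsum :: "form list \<Rightarrow> form" where
  "fsum ws = foldr fadd ws (0, 0)"

definition lmulF :: "fa \<Rightarrow> form \<Rightarrow> form" where
  "lmulF h w = (h * fst w, h * snd w)"

text \<open>Right multiplication by an element y homogeneous of degree n:
  (f e^\<pm>) y = q^n f y e^\<pm>.\<close>
definition rmulF :: "real \<Rightarrow> int \<Rightarrow> form \<Rightarrow> fa \<Rightarrow> form" where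
  "rmulF q n w y = (cst (complex_of_real (q powi n)) * fst w * y,
                    cst (complex_of_real (q powi n)) * snd w * y)"

text \<open>Star on Omega^1(S^2): with (e^\<pm>)* = -q^{\<mp>1} e^\<mp> and the commutation rule,
  (f e^+)* = -q f* e^- for |f| = -2 and (g e^-)* = -q^{-1} g* e^+ for |g| = 2.\<close>
definition fstar :: "real \<Rightarrow> form \<Rightarrow> form" where
  "fstar q w = (- (cst (complex_of_real (1/q)) * starq q (snd w)), - (Qc q * starq q (fst w)))"

definition feq :: "real \<Rightarrow> form \<Rightarrow> form \<Rightarrow> bool" where
  "feq q w v \<longleftrightarrow> eqq q (fst w) (fst v) \<and> eqq q (snd w) (snd v)"

text \<open>Elements of C_q[S^2], of S_+ (x f^+ with |x| = -1, represented by x), and of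
  Omega^1(S^2) = Omega^{1,0} + Omega^{0,1}.\<close>
definition isA :: "real \<Rightarrow> fa \<Rightarrow> bool" where "isA q h \<longleftrightarrow> homq q 0 h"
definition isS :: "real \<Rightarrow> fa \<Rightarrow> bool" where "isS q s \<longleftrightarrow> homq q (-1) s"
definition isF :: "real \<Rightarrow> form \<Rightarrow> bool" where
  "isF q w \<longleftrightarrow> homq q (-2) (fst w) \<and> homq q 2 (snd w)"

definition proj01 :: "form \<Rightarrow> form" where "proj01 w = (0, snd w)"

text \<open>Finite sums of elementary tensors w \<otimes> x f^+, as lists of pairs.\<close>
type_synonym tens = "(form \<times> fa) list"

definition isT :: "real \<Rightarrow> tens \<Rightarrow> bool" where
  "isT q T \<longleftrightarrow> (\<forall>(w, s)\<in>set T. isF q w \<and> isS q s)"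

text \<open>A-balanced complex-bilinear functionals Omega^1(S^2) x S_+ \<rightarrow> C (i.e. the linear
  functionals on the tensor product over A).\<close>
definition balanced :: "real \<Rightarrow> (form \<Rightarrow> fa \<Rightarrow> complex) \<Rightarrow> bool" where
  "balanced q \<phi> \<longleftrightarrow>
     (\<forall>w w' s s'. isF q w \<and> isF q w' \<and> isS q s \<and> isS q s' \<and> feq q w w' \<and> eqq q s s'
        \<longrightarrow> \<phi> w s = \<phi> w' s') \<and>
     (\<forall>w w' s. isF q w \<and> isF q w' \<and> isS q s \<longrightarrow> \<phi> (fadd w w') s = \<phi> w s + \<phi> w' s) \<and>
     (\<forall>w s s'. isF q w \<and> isS q s \<and> isS q s' \<longrightarrow> \<phi> w (s + s') = \<phi> w s + \<phi> w s') \<and>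
     (\<forall>c w s. isF q w \<and> isS q s \<longrightarrow> \<phi> (lmulF (cst c) w) s = c * \<phi> w s) \<and>
     (\<forall>c w s. isF q w \<and> isS q s \<longrightarrow> \<phi> w (cst c * s) = c * \<phi> w s) \<and>
     (\<forall>w h s. isF q w \<and> isA q h \<and> isS q s \<longrightarrow> \<phi> (rmulF q 0 w h) s = \<phi> w (h * s))"

text \<open>Equality in Omega^1(S^2) \<otimes>_A S_+ (two elements of a complex vector space are equal
  iff all linear functionals agree on them).\<close>
definition teq :: "real \<Rightarrow> tens \<Rightarrow> tens \<Rightarrow> bool" where
  "teq q T T' \<longleftrightarrow> isT q T \<and> isT q T' \<and>
     (\<forall>\<phi>. balanced q \<phi> \<longrightarrow>
        sum_list (map (\<lambda>(w, s). \<phi> w s) T) = sum_list (map (\<lambda>(w, s). \<phi> w s) T'))"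

definition hinner :: "real \<Rightarrow> fa \<Rightarrow> fa \<Rightarrow> fa" where
  "hinner q x y = x * starq q y"

definition left_connection :: "real \<Rightarrow> (fa \<Rightarrow> tens) \<Rightarrow> bool" where
  "left_connection q N \<longleftrightarrow>
     (\<forall>s s'. isS q s \<and> isS q s' \<and> eqq q s s' \<longrightarrow> teq q (N s) (N s')) \<and>
     (\<forall>s s'. isS q s \<and> isS q s' \<longrightarrow> teq q (N (s + s')) (N s @ N s')) \<and>
     (\<forall>c s. isS q s \<longrightarrow> teq q (N (cst c * s)) (map (\<lambda>(w, t). (lmulF (cst c) w, t)) (N s))) \<and>
     (\<forall>h s. isA q h \<and> isS q s \<longrightarrow>
        teq q (N (h * s)) ((pid q h, s) # map (\<lambda>(w, t). (lmulF h w, t)) (N s)))"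

text \<open>nabla preserves the hermitian metric:
  d<phi, conj psi> = (id \<otimes> <,>)(nabla phi \<otimes> conj psi) + (<,> \<otimes> id)(phi \<otimes> tilde nabla conj psi).\<close>
definition metric_preserving :: "real \<Rightarrow> (fa \<Rightarrow> tens) \<Rightarrow> bool" where
  "metric_preserving q N \<longleftrightarrow>
     (\<forall>x y. isS q x \<and> isS q y \<longrightarrow>
        feq q (pid q (hinner q x y))
          (fadd (fsum (map (\<lambda>(w, t). rmulF q 0 w (hinner q t y)) (N x)))
                (fsum (map (\<lambda>(w, t). lmulF (hinner q x t) (fstar q w)) (N y)))))"

text \<open>The holomorphic structure
  dbar(x f^+) = (del_- x) e^- a \<otimes> d f^+ - q^{-1} (del_- x) e^- c \<otimes> b f^+.\<close>
definition dbarS :: "real \<Rightarrow> fa \<Rightarrow> tens" where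
  "dbarS q x = [ (rmulF q 1 (0, dfree False q x) gA, gD),
                 (lmulF (cst (complex_of_real (- 1/q))) (rmulF q 1 (0, dfree False q x) gC), gB) ]"

definition has_01_part :: "real \<Rightarrow> (fa \<Rightarrow> tens) \<Rightarrow> bool" where
  "has_01_part q N \<longleftrightarrow>
     (\<forall>s. isS q s \<longrightarrow> teq q (map (\<lambda>(w, t). (proj01 w, t)) (N s)) (dbarS q s))"

definition chern_conditions :: "real \<Rightarrow> (fa \<Rightarrow> tens) \<Rightarrow> bool" where
  "chern_conditions q N \<longleftrightarrow> left_connection q N \<and> metric_preserving q N \<and> has_01_part q N"

text \<open>The q-monopole connection
  nabla(x f^+) = pi dx . a \<otimes> d f^+ - q^{-1} pi dx . c \<otimes> b f^+.\<close>
definition monopole :: "real \<Rightarrow> fa \<Rightarrow> tens" where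
  "monopole q x = [ (rmulF q 1 (pid q x) gA, gD),
                    (lmulF (cst (complex_of_real (- 1/q))) (rmulF q 1 (pid q x) gC), gB) ]"

end

theory Submission
  imports Defs
begin

text \<open>Since \<open>ad - q\<^bsup>-1\<^esup>cb = 1\<close>, every \<open>t\<close> equals \<open>(ta)d - q\<^bsup>-1\<^esup>(tc)b\<close>. Hence an element
  of \<open>\<Omega>\<^sup>1 \<otimes>\<^sub>A S\<^sub>+\<close> is determined by its contractions \<open>w \<otimes> tf\<^sup>+ \<mapsto> w.(ta)\<close> and
  \<open>w \<otimes> tf\<^sup>+ \<mapsto> w.(tc)\<close>, horizontal forms on \<open>\<complex>\<^sub>q[SU\<^sub>2]\<close>. Conversely, equal tensors have equal
  contractions: a linear functional separating the contractions modulo the relations would give a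
  balanced functional separating the tensors.

  The contraction of the monopole connection \<open>\<nabla>(xf\<^sup>+)\<close> with \<open>v\<close> is \<open>q (\<pi>dx).v\<close>. This gives the
  Leibniz rule and the (0,1)-part, and together with \<open>\<partial>\<^sub>\<plusminus>(y\<^sup>*) = -q\<^bsup>\<mp>1-|y|\<^esup>(\<partial>\<^sub>\<mp>y)\<^sup>*\<close> it
  gives metric compatibility.

  For uniqueness, the (0,1)-part fixes the \<open>e\<^sup>-\<close>-components of both contractions. The conjugate
  term of the metric equation involves only these, so testing the metric equation against \<open>y = d\<close>
  and \<open>y = -q\<^bsup>-1\<^esup>b\<close> (for which \<open>y\<^sup>* = a, c\<close>) fixes the \<open>e\<^sup>+\<close>-components.\<close>

section \<open>The free algebra\<close>

lemma cst_mult: "cst (a * b) = cst a * cst b"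
  by (simp add: cst_def mult_single)

lemma cst_add: "cst (a + b) = cst a + cst b"
  by (simp add: cst_def single_add)

lemma cst_diff: "cst (a - b) = cst a - cst b"
  by (simp add: cst_def single_diff)

lemma cst_uminus: "cst (- a) = - cst a"
  by (simp add: cst_def single_uminus)

lemma cst_0 [simp]: "cst 0 = 0"
  by (simp add: cst_def)

lemma cst_1 [simp]: "cst 1 = 1"
  by (simp add: cst_def)

lemma cst_mult_single: "cst c * Poly_Mapping.single k v = Poly_Mapping.single k (c * v)"
  by (simp add: cst_def mult_single)

lemma single_mult_cst: "Poly_Mapping.single k v * cst c = Poly_Mapping.single k (v * c)"
  by (simp add: cst_def mult_single)

lemma single_W: "Poly_Mapping.single (W l) v = cst v * wd l"
  by (simp add: wd_def cst_mult_single)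

lemma wd_mult: "wd l1 * wd l2 = wd (l1 @ l2)"
  by (simp add: wd_def mult_single)

lemma wd_Nil: "wd [] = 1"
  by (simp add: wd_def zero_word_def [symmetric])

lemma poly_mapping_induct_single_add [case_names zero single_add]:
  fixes p :: "'a \<Rightarrow>\<^sub>0 'b::monoid_add"
  assumes "P 0"
    and "\<And>k v p. k \<notin> Poly_Mapping.keys p \<Longrightarrow> v \<noteq> 0 \<Longrightarrow> P p \<Longrightarrow> P (Poly_Mapping.single k v + p)"
  shows "P p"
proof -
  have "Poly_Mapping.update k v p = Poly_Mapping.single k v + p"
    if "k \<notin> Poly_Mapping.keys p" for k v and p :: "'a \<Rightarrow>\<^sub>0 'b"
    by (rule poly_mapping_eqI)
      (use that in \<open>auto simp: lookup_update lookup_add lookup_single when_def in_keys_iff\<close>)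
  then show ?thesis
    using assms by (induction p rule: update_induct) simp_all
qed

lemma cst_commute: "cst c * p = p * cst c"
  by (induction p rule: poly_mapping_induct_single_add)
    (simp_all add: distrib_left distrib_right cst_mult_single single_mult_cst mult.commute)

lemma lookup_cst_mult: "Poly_Mapping.lookup (cst c * p) k = c * Poly_Mapping.lookup p k"
  by (induction p rule: poly_mapping_induct_single_add)
    (simp_all add: distrib_left cst_mult_single lookup_add lookup_single when_def)

lemma keys_cst_mult: "Poly_Mapping.keys (cst c * p) \<subseteq> Poly_Mapping.keys p"
  by (auto simp: in_keys_iff lookup_cst_mult)

lemma cst_mult_cst_mult: "cst a * (cst b * x) = cst (a * b) * x"
  by (simp add: cst_mult mult.assoc)

lemma mult_cst_right: "NO_MATCH (cst a) x \<Longrightarrow> x * cst c = cst c * x"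
  by (simp add: cst_commute)

lemma mult_cst_mult_right: "NO_MATCH (cst a) p \<Longrightarrow> p * (cst c * x) = cst c * (p * x)"
  by (metis cst_commute mult.assoc)

lemmas cst_normalize = cst_mult [symmetric] cst_mult_cst_mult mult_cst_right mult_cst_mult_right mult.assoc

lemma fa_bilinear_eqI:
  fixes F G :: "fa \<Rightarrow> fa \<Rightarrow> fa"
  assumes "\<And>y. F 0 y = G 0 y" "\<And>x. F x 0 = G x 0"
    and "\<And>x x' y. F (x + x') y = F x y + F x' y" "\<And>x x' y. G (x + x') y = G x y + G x' y"
    and "\<And>x y y'. F x (y + y') = F x y + F x y'" "\<And>x y y'. G x (y + y') = G x y + G x y'"
    and "\<And>l v l' v'. F (cst v * wd l) (cst v' * wd l') = G (cst v * wd l) (cst v' * wd l')"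
  shows "F x y = G x y"
proof (induction x rule: poly_mapping_induct_single_add)
  case zero
  show ?case using assms(1) .
next
  case (single_add k v p)
  obtain l where k: "k = W l" by (cases k)
  have "F (Poly_Mapping.single k v) y = G (Poly_Mapping.single k v) y"
  proof (induction y rule: poly_mapping_induct_single_add)
    case zero
    show ?case using assms(2) .
  next
    case (single_add k' v' p')
    obtain l' where k': "k' = W l'" by (cases k')
    show ?case using single_add assms(5-7) by (simp add: k k' single_W)
  qed
  then show ?case using single_add assms(3,4) by simp
qed

definition coeff_hom :: "(complex \<Rightarrow> complex) \<Rightarrow> bool" where
  "coeff_hom \<sigma> \<longleftrightarrow> (\<forall>a b. \<sigma> (a + b) = \<sigma> a + \<sigma> b) \<and> (\<forall>a b. \<sigma> (a * b) = \<sigma> a * \<sigma> b)"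

text \<open>\<open>\<sigma>\<close> acts on the coefficients: the identity for linear maps, \<open>cnj\<close> for the antilinear star.\<close>
definition word_ext :: "(complex \<Rightarrow> complex) \<Rightarrow> (gen list \<Rightarrow> fa) \<Rightarrow> fa \<Rightarrow> fa" where
  "word_ext \<sigma> f p = (\<Sum>w\<in>Poly_Mapping.keys p. cst (\<sigma> (Poly_Mapping.lookup p w)) * f (unW w))"

lemma coeff_hom_id: "coeff_hom (\<lambda>x. x)"
  by (simp add: coeff_hom_def)

lemma coeff_hom_cnj: "coeff_hom cnj"
  by (simp add: coeff_hom_def)

lemma coeff_hom_0: "coeff_hom \<sigma> \<Longrightarrow> \<sigma> 0 = 0"
  unfolding coeff_hom_def by (metis add_cancel_left_right)

lemma word_ext_superset:
  assumes "coeff_hom \<sigma>" "finite S" "Poly_Mapping.keys p \<subseteq> S"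
  shows "word_ext \<sigma> f p = (\<Sum>w\<in>S. cst (\<sigma> (Poly_Mapping.lookup p w)) * f (unW w))"
  unfolding word_ext_def
  by (rule sum.mono_neutral_left) (use assms coeff_hom_0[OF assms(1)] in \<open>auto simp: in_keys_iff\<close>)

lemma word_ext_0 [simp]: "word_ext \<sigma> f 0 = 0"
  by (simp add: word_ext_def)

lemma word_ext_single_add:
  assumes \<sigma>: "coeff_hom \<sigma>"
  shows "word_ext \<sigma> f (Poly_Mapping.single k v + p) = cst (\<sigma> v) * f (unW k) + word_ext \<sigma> f p"
proof -
  let ?S = "insert k (Poly_Mapping.keys p)"
  have "Poly_Mapping.keys (Poly_Mapping.single k v + p) \<subseteq> ?S"
    using keys_add[of "Poly_Mapping.single k v" p] by (cases "v = 0") auto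
  then have "word_ext \<sigma> f (Poly_Mapping.single k v + p)
      = (\<Sum>w\<in>?S. cst (\<sigma> (Poly_Mapping.lookup (Poly_Mapping.single k v + p) w)) * f (unW w))"
    by (intro word_ext_superset \<sigma>) auto
  also have "\<dots> = (\<Sum>w\<in>?S. (if k = w then cst (\<sigma> v) * f (unW w) else 0)
                      + cst (\<sigma> (Poly_Mapping.lookup p w)) * f (unW w))"
    by (rule sum.cong) (use \<sigma> coeff_hom_0[OF \<sigma>] in
      \<open>auto simp: coeff_hom_def lookup_add lookup_single when_def cst_add distrib_right\<close>)
  also have "\<dots> = cst (\<sigma> v) * f (unW k) + word_ext \<sigma> f p"
    using word_ext_superset[OF \<sigma> _ subset_insertI, of k p f] by (simp add: sum.distrib)
  finally show ?thesis .
qed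

lemma word_ext_add: "coeff_hom \<sigma> \<Longrightarrow> word_ext \<sigma> f (p + p') = word_ext \<sigma> f p + word_ext \<sigma> f p'"
  by (induction p rule: poly_mapping_induct_single_add) (simp_all add: add.assoc word_ext_single_add)

lemma word_ext_diff: "coeff_hom \<sigma> \<Longrightarrow> word_ext \<sigma> f (p - p') = word_ext \<sigma> f p - word_ext \<sigma> f p'"
  by (metis add_diff_cancel_right' diff_add_cancel word_ext_add)

lemma word_ext_uminus: "coeff_hom \<sigma> \<Longrightarrow> word_ext \<sigma> f (- p) = - word_ext \<sigma> f p"
  by (metis diff_0 word_ext_0 word_ext_diff)

lemma word_ext_cst: "coeff_hom \<sigma> \<Longrightarrow> word_ext \<sigma> f (cst c * p) = cst (\<sigma> c) * word_ext \<sigma> f p"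
  by (induction p rule: poly_mapping_induct_single_add)
    (simp_all add: distrib_left cst_mult_single word_ext_single_add coeff_hom_def cst_mult mult.assoc)

lemma word_ext_wd: "coeff_hom \<sigma> \<Longrightarrow> word_ext \<sigma> f (cst v * wd l) = cst (\<sigma> v) * f l"
  using word_ext_single_add[of \<sigma> f "W l" v 0] by (simp add: single_W)

definition twist :: "real \<Rightarrow> fa \<Rightarrow> fa" where
  "twist q p = word_ext (\<lambda>x. x) (\<lambda>l. cst (complex_of_real (q powi wdeg l)) * wd l) p"

lemma dfree_eq_word_ext: "dfree s q p = word_ext (\<lambda>x. x) (dw s q) p"
  by (simp add: dfree_def word_ext_def)

lemma starq_eq_word_ext: "starq q p = word_ext cnj (starw q) p"
  by (simp add: starq_def word_ext_def)

lemma wdeg_Nil [simp]: "wdeg [] = 0"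
  and wdeg_Cons [simp]: "wdeg (g # l) = gdeg g + wdeg l"
  and wdeg_append [simp]: "wdeg (l1 @ l2) = wdeg l1 + wdeg l2"
  by (simp_all add: wdeg_def)

lemma dfree_add: "dfree s q (x + y) = dfree s q x + dfree s q y"
  and dfree_diff: "dfree s q (x - y) = dfree s q x - dfree s q y"
  and dfree_uminus: "dfree s q (- y) = - dfree s q y"
  and dfree_cst: "dfree s q (cst c * y) = cst c * dfree s q y"
  and dfree_0 [simp]: "dfree s q 0 = 0"
  and dfree_wd: "dfree s q (wd l) = dw s q l"
  by (simp_all add: dfree_eq_word_ext word_ext_add word_ext_diff word_ext_uminus word_ext_cst coeff_hom_id
      word_ext_wd[of _ _ 1, simplified])

lemma twist_add: "twist q (x + y) = twist q x + twist q y"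
  and twist_diff: "twist q (x - y) = twist q x - twist q y"
  and twist_cst: "twist q (cst c * y) = cst c * twist q y"
  and twist_0 [simp]: "twist q 0 = 0"
  and twist_wd: "twist q (wd l) = cst (complex_of_real (q powi wdeg l)) * wd l"
  by (simp_all add: twist_def word_ext_add word_ext_diff word_ext_uminus word_ext_cst coeff_hom_id
      word_ext_wd[of _ _ 1, simplified])

lemma starq_add: "starq q (x + y) = starq q x + starq q y"
  and starq_diff: "starq q (x - y) = starq q x - starq q y"
  and starq_uminus: "starq q (- y) = - starq q y"
  and starq_cst: "starq q (cst c * y) = cst (cnj c) * starq q y"
  and starq_0 [simp]: "starq q 0 = 0"
  and starq_wd: "starq q (wd l) = starw q l"
  by (simp_all add: starq_eq_word_ext word_ext_add word_ext_diff word_ext_uminus word_ext_cst coeff_hom_cnj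
      word_ext_wd[of _ _ 1, simplified])

lemma dfree_1: "dfree s q 1 = 0"
  and twist_1: "twist q 1 = 1"
  and starq_1: "starq q 1 = 1"
  using dfree_wd[of s q "[]"] twist_wd[of q "[]"] starq_wd[of q "[]"] by (simp_all add: wd_Nil)

lemma starq_cst_1: "starq q (cst c) = cst (cnj c)"
  using starq_cst[of q c 1] by (simp add: starq_1)

lemma dw_append:
  assumes "q \<noteq> 0"
  shows "dw s q (l1 @ l2) = dw s q l1 * (cst (complex_of_real (q powi wdeg l2)) * wd l2) + wd l1 * dw s q l2"
proof (induction l1)
  case Nil
  show ?case by (simp add: wd_Nil)
next
  case (Cons g l1)
  have "wd [g] * (wd l1 * x) = wd (g # l1) * x" for x
    by (simp add: wd_mult flip: mult.assoc)
  with Cons assms show ?case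
    by (simp add: power_int_add wd_mult distrib_left distrib_right cst_normalize)
qed

lemma dfree_mult:
  assumes "q \<noteq> 0"
  shows "dfree s q (x * y) = dfree s q x * twist q y + x * dfree s q y"
proof (rule fa_bilinear_eqI[where F = "\<lambda>x y. dfree s q (x * y)"])
  fix l v l' v'
  show "dfree s q (cst v * wd l * (cst v' * wd l'))
      = dfree s q (cst v * wd l) * twist q (cst v' * wd l') + cst v * wd l * dfree s q (cst v' * wd l')"
    by (simp add: cst_normalize wd_mult dfree_cst dfree_wd twist_cst twist_wd dw_append[OF assms]
        distrib_left distrib_right mult.left_commute)
qed (simp_all add: distrib_left distrib_right dfree_add twist_add)

lemma twist_mult:
  assumes "q \<noteq> 0"
  shows "twist q (x * y) = twist q x * twist q y"
proof (rule fa_bilinear_eqI[where F = "\<lambda>x y. twist q (x * y)"])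
  fix l v l' v'
  show "twist q (cst v * wd l * (cst v' * wd l')) = twist q (cst v * wd l) * twist q (cst v' * wd l')"
    using assms by (simp add: cst_normalize wd_mult twist_cst twist_wd power_int_add mult.left_commute)
qed (simp_all add: distrib_left distrib_right twist_add)

lemma starw_append: "starw q (l1 @ l2) = starw q l2 * starw q l1"
  by (induction l1) (simp_all add: mult.assoc)

lemma starq_mult: "starq q (x * y) = starq q y * starq q x"
proof (rule fa_bilinear_eqI[where F = "\<lambda>x y. starq q (x * y)"])
  fix l v l' v'
  show "starq q (cst v * wd l * (cst v' * wd l')) = starq q (cst v' * wd l') * starq q (cst v * wd l)"
    by (simp add: cst_normalize wd_mult starq_cst starq_wd starw_append mult.commute)
qed (simp_all add: distrib_left distrib_right starq_add)

section \<open>Homogeneous elements\<close>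

definition homogeneous :: "int \<Rightarrow> fa \<Rightarrow> bool" where
  "homogeneous n p \<longleftrightarrow> (\<forall>w\<in>Poly_Mapping.keys p. wdeg (unW w) = n)"

lemma homogeneous_0 [simp]: "homogeneous n 0"
  by (simp add: homogeneous_def)

lemma homogeneous_add: "homogeneous n x \<Longrightarrow> homogeneous n y \<Longrightarrow> homogeneous n (x + y)"
  unfolding homogeneous_def using keys_add[of x y] by blast

lemma homogeneous_cst: "homogeneous n x \<Longrightarrow> homogeneous n (cst c * x)"
  unfolding homogeneous_def using keys_cst_mult[of c x] by blast

lemma homogeneous_uminus: "homogeneous n x \<Longrightarrow> homogeneous n (- x)"
  using homogeneous_cst[of n x "- 1"] by (simp add: cst_uminus)

lemma homogeneous_diff: "homogeneous n x \<Longrightarrow> homogeneous n y \<Longrightarrow> homogeneous n (x - y)"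
  using homogeneous_add[OF _ homogeneous_uminus, of n x y] by simp

lemma homogeneous_mult:
  assumes "homogeneous n x" "homogeneous m y"
  shows "homogeneous (n + m) (x * y)"
proof -
  have "wdeg (unW (a + b)) = wdeg (unW a) + wdeg (unW b)" for a b :: word
    by (cases a; cases b) simp
  then show ?thesis
    using assms keys_mult[of x y] unfolding homogeneous_def by fastforce
qed

lemma homogeneous_mult_eq:
  "homogeneous n x \<Longrightarrow> homogeneous m y \<Longrightarrow> k = n + m \<Longrightarrow> homogeneous k (x * y)"
  using homogeneous_mult by blast

lemma homogeneous_wd: "n = wdeg l \<Longrightarrow> homogeneous n (wd l)"
  by (simp add: homogeneous_def wd_def)

lemma homogeneous_1: "homogeneous 0 1"
  using homogeneous_wd[of 0 "[]"] by (simp add: wd_Nil)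

lemma homogeneous_gA: "homogeneous 1 gA"
  and homogeneous_gB: "homogeneous (- 1) gB"
  and homogeneous_gC: "homogeneous 1 gC"
  and homogeneous_gD: "homogeneous (- 1) gD"
  by (simp_all add: gA_def gB_def gC_def gD_def homogeneous_wd wdeg_def)

lemma homogeneous_cst_1: "homogeneous 0 (cst c)"
  using homogeneous_cst[OF homogeneous_1, of c] by simp

lemma homogeneous_induct [consumes 1, case_names zero monomial_add]:
  assumes "homogeneous n p" "P 0"
    and "\<And>v l p. wdeg l = n \<Longrightarrow> homogeneous n p \<Longrightarrow> P p \<Longrightarrow> P (cst v * wd l + p)"
  shows "P p"
  using assms(1)
proof (induction p rule: poly_mapping_induct_single_add)
  case zero
  show ?case using assms(2) .
next
  case (single_add k v p)
  obtain l where k: "k = W l" by (cases k)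
  have "Poly_Mapping.keys (Poly_Mapping.single k v + p) = insert k (Poly_Mapping.keys p)"
    using single_add.hyps
    by (auto simp: in_keys_iff lookup_add lookup_single when_def split: if_splits)
  then have "homogeneous n p" "wdeg l = n"
    using single_add.prems by (auto simp: homogeneous_def k)
  then show ?case using single_add.IH assms(3) by (simp add: k single_W)
qed

lemma twist_homogeneous: "homogeneous n p \<Longrightarrow> twist q p = cst (complex_of_real (q powi n)) * p"
  by (induction rule: homogeneous_induct)
    (simp_all add: twist_add twist_cst twist_wd distrib_left cst_normalize mult.commute)

lemma homogeneous_dw:
  "homogeneous (wdeg l - 2) (dw True q l)" "homogeneous (wdeg l + 2) (dw False q l)"
proof (induction l)
  case Nil
  show "homogeneous (wdeg [] - 2) (dw True q [])" "homogeneous (wdeg [] + 2) (dw False q [])"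
    by simp_all
next
  case (Cons g l)
  have "homogeneous (gdeg g - 2) (dg True q g)" "homogeneous (gdeg g + 2) (dg False q g)"
    by (cases g; simp add: gA_def gB_def gC_def gD_def Qc_def homogeneous_wd homogeneous_cst wdeg_def)+
  then have "homogeneous (gdeg g - 2 + wdeg l) (dg True q g * wd l)"
    "homogeneous (gdeg g + 2 + wdeg l) (dg False q g * wd l)"
    by (auto intro: homogeneous_mult homogeneous_wd)
  moreover have "homogeneous (gdeg g + (wdeg l - 2)) (wd [g] * dw True q l)"
    "homogeneous (gdeg g + (wdeg l + 2)) (wd [g] * dw False q l)"
    using Cons by (auto intro!: homogeneous_mult homogeneous_wd simp: wdeg_def)
  ultimately show "homogeneous (wdeg (g # l) - 2) (dw True q (g # l))"
    "homogeneous (wdeg (g # l) + 2) (dw False q (g # l))"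
    by (auto intro!: homogeneous_add homogeneous_cst simp: mult.assoc algebra_simps)
qed

lemma homogeneous_dfree:
  "homogeneous n p \<Longrightarrow> homogeneous (n - 2) (dfree True q p)"
  "homogeneous n p \<Longrightarrow> homogeneous (n + 2) (dfree False q p)"
  by (induction rule: homogeneous_induct; simp add: dfree_add dfree_cst dfree_wd;
      metis homogeneous_add homogeneous_cst homogeneous_dw)+

lemma homogeneous_starg: "homogeneous (- gdeg g) (starg q g)"
  by (cases g; simp add: gA_def gB_def gC_def gD_def Qc_def homogeneous_wd homogeneous_cst
      homogeneous_uminus wdeg_def)

lemma homogeneous_starw: "homogeneous (- wdeg l) (starw q l)"
proof (induction l)
  case Nil
  show ?case by (simp add: homogeneous_1)
next
  case (Cons g l)
  show ?case
    using homogeneous_mult[OF Cons homogeneous_starg[of g q]] by (simp add: algebra_simps)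
qed

lemma homogeneous_starq: "homogeneous n p \<Longrightarrow> homogeneous (- n) (starq q p)"
  by (induction rule: homogeneous_induct; simp add: starq_add starq_cst starq_wd;
      metis homogeneous_add homogeneous_cst homogeneous_starw)

lemma dfree_starg:
  assumes "q \<noteq> 0"
  shows "dfree s q (starg q g)
    = cst (- (complex_of_real q powi ((if s then -1 else 1) - gdeg g))) * starq q (dg (\<not> s) q g)"
  using assms
  by (cases s; cases g; simp add: gA_def gB_def gC_def gD_def Qc_def dfree_wd starq_wd dfree_cst
      dfree_uminus starq_cst cst_normalize wd_Nil cst_uminus)

lemma dfree_starw:
  assumes q: "q \<noteq> 0"
  shows "dfree s q (starw q l)
    = cst (- (complex_of_real q powi ((if s then -1 else 1) - wdeg l))) * starq q (dw (\<not> s) q l)"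
proof (induction l)
  case Nil
  show ?case by (simp add: dfree_1)
next
  case (Cons g l)
  let ?c = "complex_of_real q" and ?e = "if s then -1 else 1 :: int"
  have twist_starg: "twist q (starg q g) = cst (?c powi (- gdeg g)) * starg q g"
    using twist_homogeneous[OF homogeneous_starg] by simp
  have "?c \<noteq> 0" using q by simp
  then have exps: "?c powi (?e - wdeg l) * ?c powi (- gdeg g) = ?c powi (?e - wdeg (g # l))"
    "?c powi (?e - wdeg (g # l)) * ?c powi (wdeg l) = ?c powi (?e - gdeg g)"
    by (simp_all flip: power_int_add add: algebra_simps)
  have "dfree s q (starw q (g # l))
      = cst (- (?c powi (?e - wdeg l) * ?c powi (- gdeg g))) * (starq q (dw (\<not> s) q l) * starg q g)
        + cst (- (?c powi (?e - gdeg g))) * (starw q l * starq q (dg (\<not> s) q g))"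
    by (simp add: dfree_mult[OF q] Cons twist_starg dfree_starg[OF q] cst_normalize cst_uminus
        mult.commute mult.left_commute)
  also have "\<dots> = cst (- (?c powi (?e - wdeg (g # l)))) * starq q (dw (\<not> s) q (g # l))"
    unfolding exps(1) exps(2)[symmetric]
    by (simp add: starq_add starq_mult starq_cst starq_cst_1 starq_wd distrib_left cst_normalize
        cst_uminus mult.commute mult.left_commute)
  finally show ?case .
qed

lemma dfree_starq_homogeneous:
  assumes "q \<noteq> 0"
  shows "homogeneous n p \<Longrightarrow> dfree s q (starq q p)
    = cst (- (complex_of_real q powi ((if s then -1 else 1) - n))) * starq q (dfree (\<not> s) q p)"
  by (induction rule: homogeneous_induct)
    (simp_all add: starq_add dfree_add starq_cst dfree_cst starq_wd dfree_wd dfree_starw[OF assms]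
      distrib_left cst_normalize mult.commute)

section \<open>The relations of \<open>\<complex>\<^sub>q[SU\<^sub>2]\<close>\<close>

definition rel_ba :: "real \<Rightarrow> fa" where "rel_ba q = gB * gA - Qc q * gA * gB"
definition rel_ca :: "real \<Rightarrow> fa" where "rel_ca q = gC * gA - Qc q * gA * gC"
definition rel_db :: "real \<Rightarrow> fa" where "rel_db q = gD * gB - Qc q * gB * gD"
definition rel_dc :: "real \<Rightarrow> fa" where "rel_dc q = gD * gC - Qc q * gC * gD"
definition rel_bc :: fa where "rel_bc = gB * gC - gC * gB"
definition rel_da :: "real \<Rightarrow> fa" where
  "rel_da q = gD * gA - gA * gD - (Qc q - cst (complex_of_real (1/q))) * gB * gC"
definition rel_det :: "real \<Rightarrow> fa" where
  "rel_det q = gA * gD - cst (complex_of_real (1/q)) * gB * gC - 1"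

lemmas rel_defs = rel_ba_def rel_ca_def rel_db_def rel_dc_def rel_bc_def rel_da_def rel_det_def

lemma rels_eq: "rels q = {rel_ba q, rel_ca q, rel_db q, rel_dc q, rel_bc, rel_da q, rel_det q}"
  by (simp add: rels_def rel_defs)

lemma rels_relI: "rel_ba q \<in> relI q" "rel_ca q \<in> relI q" "rel_db q \<in> relI q" "rel_dc q \<in> relI q"
  "rel_bc \<in> relI q" "rel_da q \<in> relI q" "rel_det q \<in> relI q"
  by (simp_all add: relI.gen rels_eq)

lemma relI_diff: "x \<in> relI q \<Longrightarrow> y \<in> relI q \<Longrightarrow> x - y \<in> relI q"
  using relI.add[OF _ relI.lmul[of y q "cst (- 1)"], of x] by (simp add: cst_uminus)

lemma rels_homogeneous:
  assumes "r \<in> rels q"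
  shows "\<exists>n. homogeneous n r"
proof -
  have "homogeneous 0 (rel_ba q)" "homogeneous 2 (rel_ca q)" "homogeneous (- 2) (rel_db q)"
    "homogeneous 0 (rel_dc q)" "homogeneous 0 rel_bc" "homogeneous 0 (rel_da q)" "homogeneous 0 (rel_det q)"
    unfolding rel_defs Qc_def
    by (auto intro!: homogeneous_diff homogeneous_mult_eq homogeneous_gA homogeneous_gB homogeneous_gC
        homogeneous_gD homogeneous_cst_1 homogeneous_1 simp flip: cst_diff)
  then show ?thesis
    using assms unfolding rels_eq by blast
qed

lemma relI_twist:
  assumes q: "q \<noteq> 0"
  shows "x \<in> relI q \<Longrightarrow> twist q x \<in> relI q"
proof (induction rule: relI.induct)
  case (gen r)
  then obtain n where "homogeneous n r" using rels_homogeneous by blast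
  then show ?case using gen by (simp add: twist_homogeneous relI.gen relI.lmul)
qed (simp_all add: twist_add twist_mult[OF q] relI.intros)

lemma starq_gA: "starq q gA = gD"
  and starq_gB: "starq q gB = - (cst (complex_of_real q) * gC)"
  and starq_gC: "starq q gC = - (cst (complex_of_real (1/q)) * gB)"
  and starq_gD: "starq q gD = gA"
  by (simp_all add: gA_def gB_def gC_def gD_def Qc_def starq_wd)

lemma starq_rels:
  assumes "q \<noteq> 0"
  shows "starq q (rel_ba q) = cst (- complex_of_real q) * rel_dc q"
    "starq q (rel_ca q) = cst (- 1 / complex_of_real q) * rel_db q"
    "starq q (rel_db q) = cst (- complex_of_real q) * rel_ca q"
    "starq q (rel_dc q) = cst (- 1 / complex_of_real q) * rel_ba q"
    "starq q rel_bc = rel_bc"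
    "starq q (rel_da q) = rel_da q"
    "starq q (rel_det q) = rel_det q"
  using assms unfolding rel_defs Qc_def
  by (simp_all add: starq_add starq_diff starq_uminus starq_mult starq_cst starq_cst_1 starq_1
      starq_gA starq_gB starq_gC starq_gD cst_normalize cst_uminus cst_diff algebra_simps)

lemma relI_starq:
  assumes q: "q \<noteq> 0"
  shows "x \<in> relI q \<Longrightarrow> starq q x \<in> relI q"
proof (induction rule: relI.induct)
  case (gen r)
  then show ?case by (auto simp: rels_eq starq_rels[OF q] intro!: relI.lmul rels_relI)
qed (simp_all add: starq_add starq_mult relI.intros)

lemma dfree_gens:
  "dfree True q gA = gB" "dfree True q gB = 0" "dfree True q gC = gD" "dfree True q gD = 0"
  "dfree False q gA = 0" "dfree False q gB = Qc q * gA"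
  "dfree False q gC = 0" "dfree False q gD = Qc q * gC"
  by (simp_all add: gA_def gB_def gC_def gD_def dfree_wd wd_Nil)

lemma twist_gens:
  "twist q gA = Qc q * gA" "twist q gB = cst (complex_of_real (1/q)) * gB"
  "twist q gC = Qc q * gC" "twist q gD = cst (complex_of_real (1/q)) * gD"
  by (simp_all add: twist_homogeneous[OF homogeneous_gA] twist_homogeneous[OF homogeneous_gB]
      twist_homogeneous[OF homogeneous_gC] twist_homogeneous[OF homogeneous_gD] Qc_def
      power_int_minus divide_inverse)

lemma dfree_rels:
  assumes "q \<noteq> 0"
  shows "dfree True q (rel_ba q) = 0" "dfree False q (rel_ba q) = 0"
    "dfree True q (rel_ca q) = Qc q * rel_da q - rel_bc" "dfree False q (rel_ca q) = 0"
    "dfree True q (rel_db q) = 0" "dfree False q (rel_db q) = Qc q * rel_da q - rel_bc"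
    "dfree True q (rel_dc q) = 0" "dfree False q (rel_dc q) = 0"
    "dfree True q rel_bc = cst (- 1 / complex_of_real q) * rel_db q"
    "dfree False q rel_bc = cst (- complex_of_real q) * rel_ca q"
    "dfree True q (rel_da q) = rel_db q"
    "dfree False q (rel_da q) = cst (complex_of_real q ^ 2) * rel_ca q"
    "dfree True q (rel_det q) = 0" "dfree False q (rel_det q) = 0"
  using assms unfolding rel_defs
  by (simp_all add: dfree_add dfree_diff dfree_uminus dfree_mult[OF assms] dfree_cst dfree_1
      dfree_gens twist_mult[OF assms] twist_cst twist_diff twist_1 twist_gens Qc_def cst_normalize
      cst_uminus cst_diff algebra_simps power2_eq_square)

lemma relI_dfree:
  assumes q: "q \<noteq> 0"
  shows "x \<in> relI q \<Longrightarrow> dfree s q x \<in> relI q"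
proof (induction rule: relI.induct)
  case (gen r)
  then show ?case
    by (cases s) (auto simp: rels_eq dfree_rels[OF q] intro!: relI.lmul relI_diff rels_relI relI.zero)
qed (simp_all add: dfree_add dfree_mult[OF q] relI_twist[OF q] relI.intros)

lemma eqq_refl [simp]: "eqq q x x"
  by (simp add: eqq_def relI.zero)

lemma eqq_sym: "eqq q x y \<Longrightarrow> eqq q y x"
  unfolding eqq_def using relI_diff[OF relI.zero] by fastforce

lemma eqq_trans [trans]: "eqq q x y \<Longrightarrow> eqq q y z \<Longrightarrow> eqq q x z"
  unfolding eqq_def using relI.add by fastforce

lemma eqq_add: "eqq q x x' \<Longrightarrow> eqq q y y' \<Longrightarrow> eqq q (x + y) (x' + y')"
  unfolding eqq_def using relI.add by (fastforce simp: algebra_simps)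

lemma eqq_uminus: "eqq q x x' \<Longrightarrow> eqq q (- x) (- x')"
  unfolding eqq_def using relI_diff[OF relI.zero] by (fastforce simp: algebra_simps)

lemma eqq_mult: "eqq q x x' \<Longrightarrow> eqq q y y' \<Longrightarrow> eqq q (x * y) (x' * y')"
proof -
  assume "eqq q x x'" "eqq q y y'"
  then have "(x - x') * y + x' * (y - y') \<in> relI q"
    unfolding eqq_def by (intro relI.add relI.lmul relI.rmul)
  then show ?thesis unfolding eqq_def by (simp add: algebra_simps)
qed

lemma eqq_cst: "eqq q y y' \<Longrightarrow> eqq q (cst c * y) (cst c * y')"
  by (simp add: eqq_mult)

lemma eqq_twist: "q \<noteq> 0 \<Longrightarrow> eqq q x y \<Longrightarrow> eqq q (twist q x) (twist q y)"
  unfolding eqq_def by (metis twist_diff relI_twist)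

lemma eqq_dfree: "q \<noteq> 0 \<Longrightarrow> eqq q x y \<Longrightarrow> eqq q (dfree s q x) (dfree s q y)"
  unfolding eqq_def by (metis dfree_diff relI_dfree)

lemma eqq_starq: "q \<noteq> 0 \<Longrightarrow> eqq q x y \<Longrightarrow> eqq q (starq q x) (starq q y)"
  unfolding eqq_def by (metis starq_diff relI_starq)

lemma eqq_cancel_right: "eqq q (a + b) c \<Longrightarrow> eqq q (a' + b') c \<Longrightarrow> eqq q b b' \<Longrightarrow> eqq q a a'"
proof -
  assume "eqq q (a + b) c" "eqq q (a' + b') c" "eqq q b b'"
  then have "((a + b) - c) - ((a' + b') - c) - (b - b') \<in> relI q"
    unfolding eqq_def by (blast intro: relI_diff)
  then show ?thesis unfolding eqq_def by (simp add: algebra_simps)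
qed

lemma det_relation: "eqq q (gA * gD - cst (complex_of_real (1/q)) * gC * gB) 1"
proof -
  have "rel_det q + cst (complex_of_real (1/q)) * rel_bc \<in> relI q"
    by (intro relI.add relI.lmul rels_relI)
  then show ?thesis unfolding eqq_def rel_defs by (simp add: algebra_simps mult.assoc)
qed

lemma det_sandwich: "eqq q (u * gA * gD * v - cst (complex_of_real (1/q)) * (u * gC * gB * v)) (u * v)"
proof -
  have "eqq q (u * (gA * gD - cst (complex_of_real (1/q)) * gC * gB) * v) (u * 1 * v)"
    by (intro eqq_mult eqq_refl det_relation)
  then show ?thesis
    by (simp add: algebra_simps cst_normalize)
qed

lemma homq_iff: "homq q n x \<longleftrightarrow> (\<exists>p. eqq q x p \<and> homogeneous n p)"
  by (simp add: homq_def homogeneous_def)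

lemma homq_homogeneous: "homogeneous n p \<Longrightarrow> homq q n p"
  unfolding homq_iff using eqq_refl by blast

lemma homq_0 [simp]: "homq q n 0"
  by (simp add: homq_homogeneous)

lemma homq_add: "homq q n x \<Longrightarrow> homq q n y \<Longrightarrow> homq q n (x + y)"
  unfolding homq_iff by (meson eqq_add homogeneous_add)

lemma homq_cst: "homq q n x \<Longrightarrow> homq q n (cst c * x)"
  unfolding homq_iff by (meson eqq_cst homogeneous_cst)

lemma homq_mult: "homq q n x \<Longrightarrow> homq q m y \<Longrightarrow> k = n + m \<Longrightarrow> homq q k (x * y)"
  unfolding homq_iff by (meson eqq_mult homogeneous_mult)

lemma homq_dfree:
  "q \<noteq> 0 \<Longrightarrow> homq q n x \<Longrightarrow> homq q (n - 2) (dfree True q x)"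
  "q \<noteq> 0 \<Longrightarrow> homq q n x \<Longrightarrow> homq q (n + 2) (dfree False q x)"
  unfolding homq_iff by (meson eqq_dfree homogeneous_dfree)+

lemma homq_starq: "q \<noteq> 0 \<Longrightarrow> homq q n x \<Longrightarrow> homq q (- n) (starq q x)"
  unfolding homq_iff by (meson eqq_starq homogeneous_starq)

lemma homq_gA: "homq q 1 gA"
  and homq_gB: "homq q (- 1) gB"
  and homq_gC: "homq q 1 gC"
  and homq_gD: "homq q (- 1) gD"
  by (simp_all add: homq_homogeneous homogeneous_gA homogeneous_gB homogeneous_gC homogeneous_gD)

lemma twist_homq:
  assumes q: "q \<noteq> 0" and y: "homq q n y"
  shows "eqq q (twist q y) (cst (complex_of_real (q powi n)) * y)"
proof -
  obtain p where p: "eqq q y p" "homogeneous n p"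
    using y by (auto simp: homq_iff)
  have "eqq q (twist q y) (twist q p)"
    by (rule eqq_twist[OF q p(1)])
  also have "twist q p = cst (complex_of_real (q powi n)) * p"
    by (rule twist_homogeneous[OF p(2)])
  also have "eqq q \<dots> (cst (complex_of_real (q powi n)) * y)"
    by (rule eqq_cst[OF eqq_sym[OF p(1)]])
  finally show ?thesis .
qed

lemma dfree_mult_homq:
  assumes q: "q \<noteq> 0" and y: "homq q n y"
  shows "eqq q (dfree s q (x * y)) (cst (complex_of_real (q powi n)) * (dfree s q x * y) + x * dfree s q y)"
proof -
  have "eqq q (dfree s q x * twist q y) (cst (complex_of_real (q powi n)) * (dfree s q x * y))"
    using eqq_mult[OF eqq_refl twist_homq[OF q y]] by (simp add: mult_cst_mult_right)
  then show ?thesis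
    unfolding dfree_mult[OF q] by (rule eqq_add[OF _ eqq_refl])
qed

lemma dfree_starq_homq:
  assumes q: "q \<noteq> 0" and y: "homq q n y"
  shows "eqq q (dfree s q (starq q y))
    (cst (- (complex_of_real q powi ((if s then -1 else 1) - n))) * starq q (dfree (\<not> s) q y))"
proof -
  obtain p where p: "eqq q y p" "homogeneous n p"
    using y by (auto simp: homq_iff)
  have "eqq q (dfree s q (starq q y)) (dfree s q (starq q p))"
    by (intro eqq_dfree eqq_starq q p)
  also have "\<dots> = cst (- (complex_of_real q powi ((if s then -1 else 1) - n))) * starq q (dfree (\<not> s) q p)"
    by (rule dfree_starq_homogeneous[OF q p(2)])
  also have "eqq q \<dots> (cst (- (complex_of_real q powi ((if s then -1 else 1) - n))) * starq q (dfree (\<not> s) q y))"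
    by (intro eqq_cst eqq_dfree eqq_starq q eqq_sym[OF p(1)])
  finally show ?thesis .
qed

lemma dfree_mult_starq:
  assumes q: "q \<noteq> 0" and y: "homq q (- 1) y"
  shows "eqq q (dfree True q (x * starq q y)) (Qc q * (dfree True q x * starq q y) - x * starq q (dfree False q y))"
    and "eqq q (dfree False q (x * starq q y))
      (Qc q * (dfree False q x * starq q y) - cst (complex_of_real (q ^ 2)) * (x * starq q (dfree True q y)))"
proof -
  have y': "homq q 1 (starq q y)"
    using homq_starq[OF q y] by simp
  have "eqq q (dfree s q (x * starq q y)) (cst (complex_of_real (q powi 1)) * (dfree s q x * starq q y)
      + x * (cst (- (complex_of_real q powi ((if s then -1 else 1) - - 1))) * starq q (dfree (\<not> s) q y)))" for s
  proof -
    have "eqq q (dfree s q (x * starq q y))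
        (cst (complex_of_real (q powi 1)) * (dfree s q x * starq q y) + x * dfree s q (starq q y))"
      by (rule dfree_mult_homq[OF q y'])
    also have "eqq q \<dots> (cst (complex_of_real (q powi 1)) * (dfree s q x * starq q y)
        + x * (cst (- (complex_of_real q powi ((if s then -1 else 1) - - 1))) * starq q (dfree (\<not> s) q y)))"
      by (intro eqq_add eqq_mult eqq_refl dfree_starq_homq[OF q y])
    finally show ?thesis .
  qed
  from this[of True] this[of False]
  show "eqq q (dfree True q (x * starq q y)) (Qc q * (dfree True q x * starq q y) - x * starq q (dfree False q y))"
    "eqq q (dfree False q (x * starq q y))
      (Qc q * (dfree False q x * starq q y) - cst (complex_of_real (q ^ 2)) * (x * starq q (dfree True q y)))"
    by (simp_all add: Qc_def cst_uminus cst_normalize power2_eq_square)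
qed

section \<open>The tensor product \<open>\<Omega>\<^sup>1 \<otimes>\<^sub>A S\<^sub>+\<close>\<close>

lemma fsum_Nil [simp]: "fsum [] = (0, 0)"
  and fsum_Cons [simp]: "fsum (w # ws) = fadd w (fsum ws)"
  by (simp_all add: fsum_def)

lemma fst_fadd [simp]: "fst (fadd w v) = fst w + fst v"
  and snd_fadd [simp]: "snd (fadd w v) = snd w + snd v"
  and fst_lmulF [simp]: "fst (lmulF h w) = h * fst w"
  and snd_lmulF [simp]: "snd (lmulF h w) = h * snd w"
  and fst_rmulF [simp]: "fst (rmulF q n w h) = cst (complex_of_real (q powi n)) * fst w * h"
  and snd_rmulF [simp]: "snd (rmulF q n w h) = cst (complex_of_real (q powi n)) * snd w * h"
  and fst_fstar [simp]: "fst (fstar q w) = - (cst (complex_of_real (1/q)) * starq q (snd w))"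
  and snd_fstar [simp]: "snd (fstar q w) = - (Qc q * starq q (fst w))"
  and fst_proj01 [simp]: "fst (proj01 w) = 0"
  and snd_proj01 [simp]: "snd (proj01 w) = snd w"
  and fst_pid [simp]: "fst (pid q x) = dfree True q x"
  and snd_pid [simp]: "snd (pid q x) = dfree False q x"
  by (simp_all add: fadd_def lmulF_def rmulF_def fstar_def proj01_def pid_def)

lemma rmulF_0 [simp]: "rmulF q 0 w h = (fst w * h, snd w * h)"
  by (simp add: rmulF_def)

lemma feq_refl [simp]: "feq q w w"
  by (simp add: feq_def)

lemma feq_sym: "feq q w v \<Longrightarrow> feq q v w"
  by (simp add: feq_def eqq_sym)

lemma feq_trans [trans]: "feq q u v \<Longrightarrow> feq q v w \<Longrightarrow> feq q u w"
  unfolding feq_def by (metis eqq_trans)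

lemma feq_fadd: "feq q w w' \<Longrightarrow> feq q v v' \<Longrightarrow> feq q (fadd w v) (fadd w' v')"
  by (simp add: feq_def eqq_add)

lemma feq_lmulF: "feq q w w' \<Longrightarrow> feq q (lmulF h w) (lmulF h w')"
  by (simp add: feq_def eqq_mult)

lemma isT_Nil [simp]: "isT q []"
  and isT_Cons [simp]: "isT q ((w, t) # T) \<longleftrightarrow> isF q w \<and> isS q t \<and> isT q T"
  and isT_append [simp]: "isT q (T @ T') \<longleftrightarrow> isT q T \<and> isT q T'"
  by (auto simp: isT_def)

lemma isT_map_lmulF: "isA q h \<Longrightarrow> isT q T \<Longrightarrow> isT q (map (\<lambda>(w, t). (lmulF h w, t)) T)"
  by (induction T) (auto simp: isF_def isA_def intro: homq_mult[where n = 0, simplified])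

lemma isT_map_proj01: "isT q T \<Longrightarrow> isT q (map (\<lambda>(w, t). (proj01 w, t)) T)"
  by (induction T) (auto simp: isF_def)

definition contract :: "fa \<Rightarrow> tens \<Rightarrow> form" where
  "contract v T = fsum (map (\<lambda>(w, t). (fst w * (t * v), snd w * (t * v))) T)"

lemma contract_Nil [simp]: "contract v [] = (0, 0)"
  and contract_Cons [simp]:
    "contract v ((w, t) # T) = fadd (fst w * (t * v), snd w * (t * v)) (contract v T)"
  by (simp_all add: contract_def)

lemma fst_contract: "fst (contract v T) = sum_list (map (\<lambda>(w, t). fst w * (t * v)) T)"
  and snd_contract: "snd (contract v T) = sum_list (map (\<lambda>(w, t). snd w * (t * v)) T)"
  by (induction T) auto

lemma contract_append: "contract v (T @ T') = fadd (contract v T) (contract v T')"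
  by (induction T) (auto simp: fadd_def add.assoc)

lemma contract_map_lmulF: "contract v (map (\<lambda>(w, t). (lmulF h w, t)) T) = lmulF h (contract v T)"
  by (induction T) (auto simp: fadd_def lmulF_def distrib_left mult.assoc)

lemma contract_map_proj01: "contract v (map (\<lambda>(w, t). (proj01 w, t)) T) = (0, snd (contract v T))"
  by (induction T) (auto simp: fadd_def)

lemma isF_contract: "isT q T \<Longrightarrow> homq q 1 v \<Longrightarrow> isF q (contract v T)"
proof (induction T)
  case (Cons x T)
  then show ?case
    by (cases x) (auto simp: isF_def isS_def intro!: homq_add homq_mult)
qed (simp add: isF_def)

lemma balancedD:
  assumes "balanced q \<phi>"
  shows "isF q w \<Longrightarrow> isF q w' \<Longrightarrow> isS q s \<Longrightarrow> isS q s' \<Longrightarrow> feq q w w' \<Longrightarrow> eqq q s s'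
      \<Longrightarrow> \<phi> w s = \<phi> w' s'"
    and "isF q w \<Longrightarrow> isF q w' \<Longrightarrow> isS q s \<Longrightarrow> \<phi> (fadd w w') s = \<phi> w s + \<phi> w' s"
    and "isF q w \<Longrightarrow> isS q s \<Longrightarrow> isS q s' \<Longrightarrow> \<phi> w (s + s') = \<phi> w s + \<phi> w s'"
    and "isF q w \<Longrightarrow> isS q s \<Longrightarrow> \<phi> (lmulF (cst c) w) s = c * \<phi> w s"
    and "isF q w \<Longrightarrow> isS q s \<Longrightarrow> \<phi> w (cst c * s) = c * \<phi> w s"
    and "isF q w \<Longrightarrow> isA q h \<Longrightarrow> isS q s \<Longrightarrow> \<phi> (rmulF q 0 w h) s = \<phi> w (h * s)"
  using assms unfolding balanced_def by blast+

text \<open>Since \<open>t = (ta)d - q\<^bsup>-1\<^esup>(tc)b\<close>, every balanced functional only sees the contractions with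
  \<open>a\<close> and \<open>c\<close>.\<close>
lemma balanced_split:
  assumes \<phi>: "balanced q \<phi>" and w: "isF q w" and t: "isS q t"
  shows "\<phi> w t = \<phi> (fst w * (t * gA), snd w * (t * gA)) gD
    + complex_of_real (- 1/q) * \<phi> (fst w * (t * gC), snd w * (t * gC)) gB"
proof -
  have ht: "homq q (- 1) t" using t by (simp add: isS_def)
  have ta: "isA q (t * gA)" and tc: "isA q (t * gC)"
    by (auto simp: isA_def intro: homq_mult ht homq_gA homq_gC)
  have s1: "isS q (t * gA * gD)" and s2: "isS q (t * gC * gB)"
    by (auto simp: isS_def intro!: homq_mult ht homq_gA homq_gB homq_gC homq_gD)
  then have s3: "isS q (cst c * (t * gC * gB))" for c by (simp add: isS_def homq_cst)
  have s4: "isS q (t * gA * gD + cst (complex_of_real (- 1/q)) * (t * gC * gB))"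
    using s1 s3 by (simp add: isS_def homq_add)
  have "eqq q t (t * gA * gD + cst (complex_of_real (- 1/q)) * (t * gC * gB))"
    using eqq_sym[OF det_sandwich[of q t 1]] by (simp add: cst_uminus algebra_simps)
  then have "\<phi> w t = \<phi> w (t * gA * gD + cst (complex_of_real (- 1/q)) * (t * gC * gB))"
    by (intro balancedD(1)[OF \<phi> w w t s4]) (simp_all add: feq_def)
  also have "\<dots> = \<phi> w (t * gA * gD) + complex_of_real (- 1/q) * \<phi> w (t * gC * gB)"
    using balancedD(3)[OF \<phi> w s1 s3] balancedD(5)[OF \<phi> w s2] by simp
  also have "\<phi> w (t * gA * gD) = \<phi> (fst w * (t * gA), snd w * (t * gA)) gD"
    using balancedD(6)[OF \<phi> w ta isS_def[THEN iffD2, OF homq_gD]] by (simp add: mult.assoc)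
  also have "\<phi> w (t * gC * gB) = \<phi> (fst w * (t * gC), snd w * (t * gC)) gB"
    using balancedD(6)[OF \<phi> w tc isS_def[THEN iffD2, OF homq_gB]] by (simp add: mult.assoc)
  finally show ?thesis .
qed

lemma balanced_sum_list:
  assumes \<phi>: "balanced q \<phi>"
  shows "isT q T \<Longrightarrow> sum_list (map (\<lambda>(w, t). \<phi> w t) T)
    = \<phi> (contract gA T) gD + complex_of_real (- 1/q) * \<phi> (contract gC T) gB"
proof (induction T)
  case Nil
  have "\<phi> (0, 0) s = 0" if "isS q s" for s
    using balancedD(4)[OF \<phi> _ that, of "(0, 0)" 0] by (simp add: lmulF_def isF_def)
  then show ?case by (simp add: isS_def homq_gB homq_gD)
next
  case (Cons x T)
  obtain w t where x: "x = (w, t)" by (cases x)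
  have w: "isF q w" and t: "isS q t" and T: "isT q T" using Cons.prems x by auto
  have "isF q (fst w * (t * v), snd w * (t * v))" if "homq q 1 v" for v
    using isF_contract[of q "[(w, t)]" v] that w t by (simp add: fadd_def)
  then have split:
    "\<phi> (contract v ((w, t) # T)) s = \<phi> (fst w * (t * v), snd w * (t * v)) s + \<phi> (contract v T) s"
    if "homq q 1 v" "homq q (- 1) s" for v s
    using balancedD(2)[OF \<phi> _ isF_contract[OF T that(1)]] that by (simp add: isS_def)
  show ?case
    unfolding x split[OF homq_gA homq_gD] split[OF homq_gC homq_gB]
    by (simp add: balanced_split[OF \<phi> w t] Cons.IH[OF T] algebra_simps)
qed

lemma teq_if_contract:
  assumes T: "isT q T" and T': "isT q T'"
    and "feq q (contract gA T) (contract gA T')" "feq q (contract gC T) (contract gC T')"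
  shows "teq q T T'"
  unfolding teq_def
proof (intro conjI allI impI T T')
  fix \<phi> assume \<phi>: "balanced q \<phi>"
  have S: "isS q gD" "isS q gB" by (simp_all add: isS_def homq_gB homq_gD)
  show "sum_list (map (\<lambda>(w, t). \<phi> w t) T) = sum_list (map (\<lambda>(w, t). \<phi> w t) T')"
    unfolding balanced_sum_list[OF \<phi> T] balanced_sum_list[OF \<phi> T']
    using balancedD(1)[OF \<phi> isF_contract[OF T homq_gA] isF_contract[OF T' homq_gA] S(1) S(1) assms(3)]
      balancedD(1)[OF \<phi> isF_contract[OF T homq_gC] isF_contract[OF T' homq_gC] S(2) S(2) assms(4)]
    by simp
qed

lemma linear_functional_separation:
  fixes S :: "fa set"
  assumes "0 \<in> S" "\<And>x y. x \<in> S \<Longrightarrow> y \<in> S \<Longrightarrow> x + y \<in> S" "\<And>c x. x \<in> S \<Longrightarrow> cst c * x \<in> S"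
    and "x \<notin> S"
  obtains \<psi> :: "fa \<Rightarrow> complex"
  where "\<And>a b. \<psi> (a + b) = \<psi> a + \<psi> b" "\<And>c a. \<psi> (cst c * a) = c * \<psi> a"
    "\<And>r. r \<in> S \<Longrightarrow> \<psi> r = 0" "\<psi> x = 1"
proof -
  interpret V: vector_space "\<lambda>c (v::fa). cst c * v"
    by unfold_locales (simp_all add: distrib_left cst_add distrib_right cst_mult mult.assoc)
  interpret C: vector_space "(*) :: complex \<Rightarrow> complex \<Rightarrow> complex"
    by unfold_locales (simp_all add: algebra_simps)
  interpret P: vector_space_pair "\<lambda>c (v::fa). cst c * v" "(*) :: complex \<Rightarrow> complex \<Rightarrow> complex" ..
  have sub: "V.subspace S" unfolding V.subspace_def using assms(1-3) by blast
  obtain B where B: "B \<subseteq> S" "V.independent B" "S \<subseteq> V.span B"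
    using V.maximal_independent_subset[of S] by blast
  have "x \<notin> V.span B" using V.span_minimal[OF B(1) sub] assms(4) by blast
  then have "V.independent (insert x B)" and xB: "x \<notin> B"
    using V.independent_insertI B(2) V.span_superset by blast+
  then obtain g where g: "Vector_Spaces.linear (\<lambda>c (v::fa). cst c * v) (*) g"
    "\<forall>v\<in>insert x B. g v = (if v = x then 1 else 0)"
    using P.linear_independent_extend[of "insert x B" "\<lambda>v. if v = x then 1 else 0"] by blast
  have "g r = 0" if "r \<in> S" for r
  proof -
    have "g r = (\<lambda>_. 0) r"
      by (rule P.linear_eq_on_span[OF g(1) P.linear_zero, of B]) (use g(2) xB B(3) that in auto)
    then show ?thesis by simp
  qed
  moreover have "g (a + b) = g a + g b" "g (cst c * a) = c * g a" for a b c
    using g(1) unfolding Vector_Spaces.linear_iff by auto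
  ultimately show ?thesis using that[of g] g(2) by auto
qed

text \<open>Conversely, equal elements of the tensor product have equal contractions: otherwise a linear
  functional separating the two contractions modulo the relations would give a balanced functional
  distinguishing them.\<close>
lemma teq_contract:
  assumes "teq q T T'"
  shows "feq q (contract v T) (contract v T')"
proof -
  have "eqq q (sum_list (map (\<lambda>(w, t). sel w * (t * v)) T)) (sum_list (map (\<lambda>(w, t). sel w * (t * v)) T'))"
    if sel: "sel = fst \<or> sel = snd" for sel :: "form \<Rightarrow> fa"
  proof (rule ccontr)
    let ?x = "sum_list (map (\<lambda>(w, t). sel w * (t * v)) T) - sum_list (map (\<lambda>(w, t). sel w * (t * v)) T')"
    assume "\<not> ?thesis"
    then have "?x \<notin> relI q" by (simp add: eqq_def)
    then obtain \<psi> :: "fa \<Rightarrow> complex" where add: "\<And>a b. \<psi> (a + b) = \<psi> a + \<psi> b"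
      and scale: "\<And>c a. \<psi> (cst c * a) = c * \<psi> a" and rel: "\<And>r. r \<in> relI q \<Longrightarrow> \<psi> r = 0"
      and x: "\<psi> ?x = 1"
      using linear_functional_separation[OF relI.zero relI.add relI.lmul] by blast
    have \<psi>_diff: "\<psi> (a - b) = \<psi> a - \<psi> b" for a b
      using add[of b "a - b"] by simp
    have \<psi>_eqq: "eqq q a b \<Longrightarrow> \<psi> a = \<psi> b" for a b
      using rel[of "a - b"] \<psi>_diff by (simp add: eqq_def)
    have sel_eqq: "feq q w w' \<Longrightarrow> eqq q (sel w) (sel w')" for w w'
      using sel by (auto simp: feq_def)
    define \<phi> where "\<phi> w t = \<psi> (sel w * (t * v))" for w t
    have "balanced q \<phi>"
      unfolding balanced_def
    proof (intro conjI allI impI)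
      fix w w' s s' assume "isF q w \<and> isF q w' \<and> isS q s \<and> isS q s' \<and> feq q w w' \<and> eqq q s s'"
      then show "\<phi> w s = \<phi> w' s'"
        unfolding \<phi>_def by (intro \<psi>_eqq eqq_mult sel_eqq eqq_refl) auto
    qed (use sel in \<open>auto simp: \<phi>_def fadd_def lmulF_def distrib_left distrib_right add scale
      cst_normalize\<close>)
    then have "sum_list (map (\<lambda>(w, t). \<phi> w t) T) = sum_list (map (\<lambda>(w, t). \<phi> w t) T')"
      using assms unfolding teq_def by blast
    moreover have "\<psi> (sum_list (map (\<lambda>(w, t). sel w * (t * v)) S)) = sum_list (map (\<lambda>(w, t). \<phi> w t) S)"
      for S
      unfolding \<phi>_def by (induction S) (auto simp: add scale[of 0 0, simplified])
    ultimately have "\<psi> ?x = 0" by (simp add: \<psi>_diff)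
    then show False using x by simp
  qed
  then show ?thesis
    unfolding feq_def fst_contract snd_contract by blast
qed

lemma teq_isT: "teq q T T' \<Longrightarrow> isT q T \<and> isT q T'"
  by (simp add: teq_def)

section \<open>The \<open>q\<close>-monopole connection\<close>

definition tens_of_form :: "real \<Rightarrow> form \<Rightarrow> tens" where
  "tens_of_form q P = [(rmulF q 1 P gA, gD), (lmulF (cst (complex_of_real (- 1/q))) (rmulF q 1 P gC), gB)]"

lemma monopole_eq: "monopole q x = tens_of_form q (pid q x)"
  by (simp add: monopole_def tens_of_form_def)

lemma dbarS_eq: "dbarS q x = tens_of_form q (0, dfree False q x)"
  by (simp add: dbarS_def tens_of_form_def)

lemma isT_tens_of_form:
  assumes "homq q (- 3) (fst P)" "homq q 1 (snd P)"
  shows "isT q (tens_of_form q P)"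
  using assms
  by (auto simp: tens_of_form_def isF_def isS_def
      intro!: homq_mult homq_cst homq_gA homq_gB homq_gC homq_gD)

lemma contract_tens_of_form:
  assumes "q \<noteq> 0"
  shows "feq q (contract v (tens_of_form q P)) (lmulF (Qc q) (rmulF q 0 P v))"
proof -
  have "contract v (tens_of_form q P) = lmulF (Qc q)
    (fst P * gA * gD * v - cst (complex_of_real (1/q)) * (fst P * gC * gB * v),
     snd P * gA * gD * v - cst (complex_of_real (1/q)) * (snd P * gC * gB * v))"
    using assms by (simp add: tens_of_form_def fadd_def lmulF_def Qc_def cst_normalize cst_uminus
        algebra_simps)
  then show ?thesis
    unfolding feq_def lmulF_def
    using eqq_mult[OF eqq_refl det_sandwich[of q "fst P" v]]
      eqq_mult[OF eqq_refl det_sandwich[of q "snd P" v]]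
    by (simp add: mult.assoc)
qed

lemma snd_contract_tens_of_form:
  "snd (contract v (tens_of_form q P)) = snd (contract v (tens_of_form q (0, snd P)))"
  by (simp add: tens_of_form_def)

text \<open>The term \<open>(\<langle>,\<rangle> \<otimes> id)(x \<otimes> \<tilde>\<nabla>(conj y))\<close> of the metric equation, for \<open>T = \<nabla>y\<close>.\<close>
definition conj_pairing :: "real \<Rightarrow> fa \<Rightarrow> tens \<Rightarrow> form" where
  "conj_pairing q x T = fsum (map (\<lambda>(w, t). lmulF (hinner q x t) (fstar q w)) T)"

lemma metric_preserving_iff:
  "metric_preserving q N \<longleftrightarrow> (\<forall>x y. isS q x \<and> isS q y \<longrightarrow>
     feq q (pid q (x * starq q y)) (fadd (contract (starq q y) (N x)) (conj_pairing q x (N y))))"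
proof -
  have "fsum (map (\<lambda>(w, t). rmulF q 0 w (hinner q t y)) T) = contract (starq q y) T" for y T
    by (induction T) (auto simp: hinner_def)
  then show ?thesis
    by (simp add: metric_preserving_def conj_pairing_def hinner_def)
qed

lemma fst_conj_pairing:
    "fst (conj_pairing q x T) = - (cst (complex_of_real (1/q)) * (x * starq q (snd (contract 1 T))))"
  and snd_conj_pairing: "snd (conj_pairing q x T) = - (Qc q * (x * starq q (fst (contract 1 T))))"
  by (induction T) (auto simp: conj_pairing_def hinner_def Qc_def starq_add starq_mult distrib_left
      cst_normalize)

context
  fixes q :: real
  assumes q: "q \<noteq> 0"
begin

lemma isT_monopole: "isS q s \<Longrightarrow> isT q (monopole q s)"
  unfolding monopole_eq isS_def
  by (rule isT_tens_of_form) (use homq_dfree[OF q, of "- 1" s] in simp_all)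

lemma isT_dbarS: "isS q s \<Longrightarrow> isT q (dbarS q s)"
  unfolding dbarS_eq isS_def
  by (rule isT_tens_of_form) (use homq_dfree[OF q, of "- 1" s] in simp_all)

lemma contract_monopole: "feq q (contract v (monopole q s)) (lmulF (Qc q) (rmulF q 0 (pid q s) v))"
  unfolding monopole_eq by (rule contract_tens_of_form[OF q])

lemma teq_monopoleI:
  assumes "isS q s" "isT q T" "\<And>v. feq q (contract v T) (lmulF (Qc q) (rmulF q 0 (pid q s) v))"
  shows "teq q (monopole q s) T"
proof -
  have "feq q (contract v (monopole q s)) (contract v T)" for v
    using contract_monopole[of v s] feq_sym[OF assms(3)[of v]] by (rule feq_trans)
  then show ?thesis
    by (intro teq_if_contract isT_monopole assms(1,2))
qed

lemma teq_monopole_cong: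
  assumes s: "isS q s" "isS q s'" "eqq q s s'"
  shows "teq q (monopole q s) (monopole q s')"
proof (rule teq_monopoleI[OF s(1) isT_monopole[OF s(2)]])
  fix v
  note contract_monopole[of v s']
  also have "feq q (lmulF (Qc q) (rmulF q 0 (pid q s') v)) (lmulF (Qc q) (rmulF q 0 (pid q s) v))"
    using s by (simp add: feq_def lmulF_def eqq_mult eqq_dfree[OF q] eqq_sym)
  finally show "feq q (contract v (monopole q s')) (lmulF (Qc q) (rmulF q 0 (pid q s) v))" .
qed

lemma teq_monopole_add:
  assumes s: "isS q s" "isS q s'"
  shows "teq q (monopole q (s + s')) (monopole q s @ monopole q s')"
proof (rule teq_monopoleI)
  show "isS q (s + s')" using s by (simp add: isS_def homq_add)
  show "isT q (monopole q s @ monopole q s')" using s by (simp add: isT_monopole)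
next
  fix v
  have "contract v (monopole q s @ monopole q s') = fadd (contract v (monopole q s)) (contract v (monopole q s'))"
    by (rule contract_append)
  also have "feq q \<dots> (fadd (lmulF (Qc q) (rmulF q 0 (pid q s) v)) (lmulF (Qc q) (rmulF q 0 (pid q s') v)))"
    by (intro feq_fadd contract_monopole)
  also have "\<dots> = lmulF (Qc q) (rmulF q 0 (pid q (s + s')) v)"
    by (simp add: fadd_def lmulF_def dfree_add algebra_simps)
  finally show "feq q (contract v (monopole q s @ monopole q s')) (lmulF (Qc q) (rmulF q 0 (pid q (s + s')) v))" .
qed

lemma teq_monopole_cst:
  assumes s: "isS q s"
  shows "teq q (monopole q (cst c * s)) (map (\<lambda>(w, t). (lmulF (cst c) w, t)) (monopole q s))"
proof (rule teq_monopoleI)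
  show "isS q (cst c * s)" using s by (simp add: isS_def homq_cst)
  show "isT q (map (\<lambda>(w, t). (lmulF (cst c) w, t)) (monopole q s))"
    using s by (intro isT_map_lmulF isT_monopole) (simp_all add: isA_def homq_homogeneous homogeneous_cst_1)
next
  fix v
  have "contract v (map (\<lambda>(w, t). (lmulF (cst c) w, t)) (monopole q s)) = lmulF (cst c) (contract v (monopole q s))"
    by (rule contract_map_lmulF)
  also have "feq q \<dots> (lmulF (cst c) (lmulF (Qc q) (rmulF q 0 (pid q s) v)))"
    by (intro feq_lmulF contract_monopole)
  also have "\<dots> = lmulF (Qc q) (rmulF q 0 (pid q (cst c * s)) v)"
    by (simp add: lmulF_def dfree_cst Qc_def cst_normalize mult.commute)
  finally show "feq q (contract v (map (\<lambda>(w, t). (lmulF (cst c) w, t)) (monopole q s)))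
      (lmulF (Qc q) (rmulF q 0 (pid q (cst c * s)) v))" .
qed

lemma teq_monopole_mult:
  assumes h: "isA q h" and s: "isS q s"
  shows "teq q (monopole q (h * s)) ((pid q h, s) # map (\<lambda>(w, t). (lmulF h w, t)) (monopole q s))"
proof (rule teq_monopoleI)
  have h0: "homq q 0 h" using h by (simp add: isA_def)
  show "isS q (h * s)" using h0 s by (auto simp: isS_def intro: homq_mult)
  show "isT q ((pid q h, s) # map (\<lambda>(w, t). (lmulF h w, t)) (monopole q s))"
    using s homq_dfree[OF q h0] isT_map_lmulF[OF h isT_monopole[OF s]] by (simp add: isF_def)
next
  fix v
  have "contract v ((pid q h, s) # map (\<lambda>(w, t). (lmulF h w, t)) (monopole q s))
      = fadd (rmulF q 0 (pid q h) (s * v)) (lmulF h (contract v (monopole q s)))"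
    by (simp add: contract_map_lmulF)
  also have "feq q \<dots> (fadd (rmulF q 0 (pid q h) (s * v)) (lmulF h (lmulF (Qc q) (rmulF q 0 (pid q s) v))))"
    by (intro feq_fadd feq_refl feq_lmulF contract_monopole)
  also have "feq q \<dots> (lmulF (Qc q) (rmulF q 0 (pid q (h * s)) v))"
  proof -
    have "complex_of_real q * complex_of_real q powi (- 1) = 1"
      using q by (simp add: power_int_minus)
    moreover have s': "homq q (- 1) s" using s by (simp add: isS_def)
    ultimately have "eqq q (dfree b q h * (s * v) + h * (Qc q * (dfree b q s * v))) (Qc q * (dfree b q (h * s) * v))"
      for b
      using eqq_mult[OF eqq_refl eqq_mult[OF dfree_mult_homq[OF q s', of b h] eqq_refl], of "Qc q" v]
      by (simp add: Qc_def distrib_left distrib_right cst_normalize eqq_sym)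
    then show ?thesis
      by (simp add: feq_def fadd_def lmulF_def mult.assoc)
  qed
  finally show "feq q (contract v ((pid q h, s) # map (\<lambda>(w, t). (lmulF h w, t)) (monopole q s)))
      (lmulF (Qc q) (rmulF q 0 (pid q (h * s)) v))" .
qed

lemma left_connection_monopole: "left_connection q (monopole q)"
  unfolding left_connection_def
  using teq_monopole_cong teq_monopole_add teq_monopole_cst teq_monopole_mult by blast

lemma conj_pairing_monopole:
  "feq q (conj_pairing q x (monopole q y))
     (- (x * starq q (dfree False q y)), - (cst (complex_of_real (q ^ 2)) * (x * starq q (dfree True q y))))"
proof -
  have c: "eqq q (fst (contract 1 (monopole q y))) (Qc q * dfree True q y)"
    "eqq q (snd (contract 1 (monopole q y))) (Qc q * dfree False q y)"
    using contract_monopole[of 1 y] by (simp_all add: feq_def lmulF_def)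
  have "eqq q (fst (conj_pairing q x (monopole q y)))
      (- (cst (complex_of_real (1/q)) * (x * starq q (Qc q * dfree False q y))))"
    unfolding fst_conj_pairing by (intro eqq_uminus eqq_mult eqq_refl eqq_starq q c)
  moreover have "eqq q (snd (conj_pairing q x (monopole q y)))
      (- (Qc q * (x * starq q (Qc q * dfree True q y))))"
    unfolding snd_conj_pairing by (intro eqq_uminus eqq_mult eqq_refl eqq_starq q c)
  ultimately show ?thesis
    using q by (simp add: feq_def Qc_def starq_cst cst_normalize power2_eq_square)
qed

lemma metric_preserving_monopole: "metric_preserving q (monopole q)"
  unfolding metric_preserving_iff
proof (intro allI impI)
  fix x y assume "isS q x \<and> isS q y"
  then have y: "homq q (- 1) y" by (simp add: isS_def)
  have "feq q (fadd (contract (starq q y) (monopole q x)) (conj_pairing q x (monopole q y)))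
     (fadd (lmulF (Qc q) (rmulF q 0 (pid q x) (starq q y)))
       (- (x * starq q (dfree False q y)), - (cst (complex_of_real (q ^ 2)) * (x * starq q (dfree True q y)))))"
    by (intro feq_fadd contract_monopole conj_pairing_monopole)
  moreover note dfree_mult_starq[OF q y, of x]
  ultimately show "feq q (pid q (x * starq q y))
      (fadd (contract (starq q y) (monopole q x)) (conj_pairing q x (monopole q y)))"
    by (auto simp: feq_def fadd_def lmulF_def mult.assoc intro: eqq_trans eqq_sym)
qed

lemma snd_contract_dbarS: "snd (contract v (dbarS q s)) = snd (contract v (monopole q s))"
  unfolding monopole_eq dbarS_eq by (subst (2) snd_contract_tens_of_form) simp

lemma has_01_part_monopole: "has_01_part q (monopole q)"
  unfolding has_01_part_def
proof (intro allI impI)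
  fix s assume s: "isS q s"
  have "feq q (contract v (map (\<lambda>(w, t). (proj01 w, t)) (monopole q s))) (contract v (dbarS q s))" for v
  proof -
    have "eqq q 0 (fst (contract v (dbarS q s)))"
      using contract_tens_of_form[OF q, of v "(0, dfree False q s)"] by (simp add: dbarS_eq feq_def eqq_sym)
    then show ?thesis
      by (simp add: contract_map_proj01 feq_def snd_contract_dbarS)
  qed
  then show "teq q (map (\<lambda>(w, t). (proj01 w, t)) (monopole q s)) (dbarS q s)"
    by (intro teq_if_contract isT_map_proj01 isT_monopole isT_dbarS s)
qed

lemma chern_conditions_monopole: "chern_conditions q (monopole q)"
  unfolding chern_conditions_def
  using left_connection_monopole metric_preserving_monopole has_01_part_monopole by blast

lemma chern_conditions_unique:
  assumes N: "chern_conditions q N" and s: "isS q s"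
  shows "teq q (N s) (monopole q s)"
proof -
  have lc: "left_connection q N" and mp: "metric_preserving q N" and h01: "has_01_part q N"
    using N by (auto simp: chern_conditions_def)
  have isT_N: "isT q (N y)" if "isS q y" for y
    using lc that unfolding left_connection_def by (meson eqq_refl teq_isT)
  have snd_eq: "eqq q (snd (contract v (N y))) (snd (contract v (monopole q y)))" if y: "isS q y" for v y
  proof -
    have "teq q (map (\<lambda>(w, t). (proj01 w, t)) (N y)) (dbarS q y)"
      using h01 y unfolding has_01_part_def by blast
    then have "feq q (contract v (map (\<lambda>(w, t). (proj01 w, t)) (N y))) (contract v (dbarS q y))"
      by (rule teq_contract)
    then show ?thesis
      by (simp add: feq_def contract_map_proj01 snd_contract_dbarS)
  qed
  have fst_eq: "eqq q (fst (contract (starq q y) (N s))) (fst (contract (starq q y) (monopole q s)))"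
    if y: "isS q y" for y
  proof (rule eqq_cancel_right)
    show "eqq q (fst (contract (starq q y) (N s)) + fst (conj_pairing q s (N y))) (dfree True q (s * starq q y))"
      using mp s y unfolding metric_preserving_iff feq_def by (auto intro: eqq_sym)
    show "eqq q (fst (contract (starq q y) (monopole q s)) + fst (conj_pairing q s (monopole q y)))
        (dfree True q (s * starq q y))"
      using metric_preserving_monopole s y unfolding metric_preserving_iff feq_def by (auto intro: eqq_sym)
    show "eqq q (fst (conj_pairing q s (N y))) (fst (conj_pairing q s (monopole q y)))"
      unfolding fst_conj_pairing by (intro eqq_uminus eqq_mult eqq_refl eqq_starq q snd_eq y)
  qed
  have yD: "isS q gD" and yB: "isS q (cst (complex_of_real (- 1/q)) * gB)"
    by (simp_all add: isS_def homq_gB homq_gD homq_cst)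
  have "starq q gD = gA" "starq q (cst (complex_of_real (- 1/q)) * gB) = gC"
    using q by (simp_all add: starq_gD starq_gB starq_cst starq_uminus cst_normalize cst_uminus)
  then show ?thesis
    using fst_eq[OF yD] fst_eq[OF yB] snd_eq[OF s]
    by (intro teq_if_contract isT_N isT_monopole s) (auto simp: feq_def)
qed

end

theorem mainTheorem14:
  fixes q :: real
  assumes "q \<noteq> 0"
  shows "chern_conditions q (monopole q) \<and>
         (\<forall>N. chern_conditions q N \<longrightarrow> (\<forall>s. isS q s \<longrightarrow> teq q (N s) (monopole q s)))"
  using chern_conditions_monopole[OF assms] chern_conditions_unique[OF assms] by blast

end
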